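(* Consider the Gaussian broadcast model on $P=\mathcal{HS}_3$ with $\alpha_3=1/3$. Let $t\ge2$ be an integer, $N$ a positive integer, and $(a_{(i,j)})_{i,j\in[N]}$ a real matrix that is not identically zero. Then $\zeta:=\sum_{(i,j)\in[N]^2}a_{(i,j)}X_{(i,j,t-i-j)}$ satisfies $$\frac{\operatorname{Cov}(\zeta,X_0)}{\sqrt{\operatorname{Var}(\zeta)}}\le\frac{2^{24}N^2}{\sqrt{\log t}}.$$
   Context: Infinite model: $\mathcal{HS}_{d+1}=\{(x_1,\dots,x_{d+1})\in\mathbb Z^{d+1}:x_1+\dots+x_{d+1}\ge0\}$ with $u\le v$ iff $v-u\in\mathbb Z_{\ge0}^{d+1}$; layer $L_t$ = points with coordinate sum $t$; each point $v$ of rank $\ge1$ covers exactly the $d+1$ points $v-e_i$ (the set $\mathfrak p(v)$). Gaussian broadcast model: $X_0\sim\mathcal N(0,1)$; independently, i.i.d. $W_{u\to v}\sim\mathcal N(0,1)$ for covering pairs $u\lessdot v$; $X_v=X_0$ for every $v\in L_0$; and $X_v=\alpha_{d+1}\sum_{u\in\mathfrak p(v)}(X_u+W_{u\to v})$ for $v$ of rank $\ge1$. Here $d=2$; $\log$ is the natural logarithm. *)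

theory Defs
  imports "HOL-Probability.Probability"
begin

text \<open>Points of HS_3 are represented as integer triples; rank = coordinate sum.\<close>
type_synonym pt = "int \<times> int \<times> int"

definition rank :: "pt \<Rightarrow> int" where
  "rank v = (case v of (x, y, z) \<Rightarrow> x + y + z)"

definition pred_pt :: "pt \<Rightarrow> nat \<Rightarrow> pt" where
  "pred_pt v i = (case v of (x, y, z) \<Rightarrow>
      if i = 0 then (x - 1, y, z) else if i = 1 then (x, y - 1, z) else (x, y, z - 1))"

text \<open>Covering pairs u \<lessdot> v of HS_3: v = u + e_i with u in HS_3.\<close>
definition covers :: "(pt \<times> pt) set" where
  "covers = {(u, v). rank u \<ge> 0 \<and> (\<exists>i<3. u = pred_pt v i)}"

definition cov :: "'a measure \<Rightarrow> ('a \<Rightarrow> real) \<Rightarrow> ('a \<Rightarrow> real) \<Rightarrow> real" where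
  "cov M Y Z = integral\<^sup>L M (\<lambda>\<omega>. (Y \<omega> - integral\<^sup>L M Y) * (Z \<omega> - integral\<^sup>L M Z))"

end

theory Submission
  imports Defs "HOL-Library.Groups_Big_Fun"
begin

(*
  Unrolling the recursion writes X v, for v of rank t, as X0 plus a linear combination of the
  independent edge noises. Hence zeta = S X0 + sum_e b_e W_e with S = sum a_ij, so that
  Cov(zeta, X0) = S and Var zeta = S^2 + sum_e b_e^2, and it suffices to bound sum_e b_e^2 below.

  The coefficient vectors of two points of rank t have inner product G_t(z)/3, where z is the
  difference of their first two coordinates and G_t(z) = sum_{m<t} r_m(z) accumulates the
  probabilities r_m(z) that two independent m-step walks on Z^2 with uniform steps (1,0), (0,1),
  (0,0) differ by z. A second-moment argument gives r_m(0) >= 1/(30 m), so G_t(0) >= log t / 30.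
  On the other hand r_m(0) - r_m(z) is half the squared l^2-distance between the law of the walk
  and its translate by z, which is O(|z|^2) times the same quantity for unit shifts; these
  telescope against r_m(0) - r_{m+1}(0), so G_t(0) - G_t(z) = O(|z|^2) uniformly in t.
  Expanding 3 sum_e b_e^2 = sum a_p a_p' G_t(p - p') around G_t(0) gives
  3 sum_e b_e^2 >= S^2 G_t(0) - 18 N^4 sum_p a_p^2, and the term m = 0 alone shows
  sum_p a_p^2 <= 3 sum_e b_e^2; together sum_e b_e^2 >= c S^2 log t / N^4.
*)

section \<open>Linear combinations of independent standard normals\<close>

context prob_space
begin

lemma std_normal_moments:
  assumes "distributed M lborel Y std_normal_density"
  shows "integrable M Y" "expectation Y = 0"
    "integrable M (\<lambda>\<omega>. Y \<omega> * Y \<omega>)" "expectation (\<lambda>\<omega>. Y \<omega> * Y \<omega>) = 1"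
proof -
  have nonneg: "\<And>x. 0 \<le> std_normal_density x" by (simp add: normal_density_nonneg)
  show "integrable M Y"
    using distributed_integrable[OF assms, of "\<lambda>x. x"] integrable_std_normal_moment[of 1] nonneg
    by simp
  show mean: "expectation Y = 0" by (rule standard_normal_distributed_expectation[OF assms])
  show "integrable M (\<lambda>\<omega>. Y \<omega> * Y \<omega>)"
    using distributed_integrable[OF assms, of "\<lambda>x. x * x"] integrable_std_normal_moment[of 2] nonneg
    by (simp add: power2_eq_square)
  show "expectation (\<lambda>\<omega>. Y \<omega> * Y \<omega>) = 1"
    using standard_normal_distributed_variance[OF assms] mean by (simp add: power2_eq_square)
qed

lemma indep_std_normal_product:
  assumes normal: "\<And>i. i \<in> J \<Longrightarrow> distributed M lborel (Y i) std_normal_density"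
    and indep: "indep_vars (\<lambda>_. borel) Y J" and "i \<in> J" "j \<in> J"
  shows "integrable M (\<lambda>\<omega>. Y i \<omega> * Y j \<omega>)"
    "expectation (\<lambda>\<omega>. Y i \<omega> * Y j \<omega>) = (if i = j then 1 else 0)"
proof -
  have "integrable M (\<lambda>\<omega>. Y i \<omega> * Y j \<omega>) \<and>
    expectation (\<lambda>\<omega>. Y i \<omega> * Y j \<omega>) = (if i = j then 1 else 0)"
  proof (cases "i = j")
    case True
    then show ?thesis using std_normal_moments[OF normal[OF \<open>i \<in> J\<close>]] by simp
  next
    case False
    have "indep_vars (\<lambda>_. borel) Y {i, j}"
      using indep_vars_subset[OF indep] \<open>i \<in> J\<close> \<open>j \<in> J\<close> by auto
    from indep_vars_sum[OF _ _ this] False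
    have ij: "indep_var borel (Y i) borel (Y j)" by simp
    show ?thesis
      using indep_var_lebesgue_integral[OF ij] indep_var_integrable[OF ij] False
        std_normal_moments[OF normal[OF \<open>i \<in> J\<close>]] std_normal_moments[OF normal[OF \<open>j \<in> J\<close>]]
      by simp
  qed
  then show "integrable M (\<lambda>\<omega>. Y i \<omega> * Y j \<omega>)"
    "expectation (\<lambda>\<omega>. Y i \<omega> * Y j \<omega>) = (if i = j then 1 else 0)" by auto
qed

lemma indep_std_normal_lin_comb:
  assumes normal: "\<And>i. i \<in> J \<Longrightarrow> distributed M lborel (Y i) std_normal_density"
    and indep: "indep_vars (\<lambda>_. borel) Y J" and F: "finite F" "F \<subseteq> J"
  shows "expectation (\<lambda>\<omega>. \<Sum>i\<in>F. c i * Y i \<omega>) = 0"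
    "expectation (\<lambda>\<omega>. (\<Sum>i\<in>F. c i * Y i \<omega>) * (\<Sum>i\<in>F. d i * Y i \<omega>)) = (\<Sum>i\<in>F. c i * d i)"
proof -
  show "expectation (\<lambda>\<omega>. \<Sum>i\<in>F. c i * Y i \<omega>) = 0"
    using std_normal_moments(1,2)[OF normal] F
    by (subst Bochner_Integration.integral_sum) (auto simp: subset_eq)
  have "expectation (\<lambda>\<omega>. (\<Sum>i\<in>F. c i * Y i \<omega>) * (\<Sum>i\<in>F. d i * Y i \<omega>))
      = expectation (\<lambda>\<omega>. \<Sum>i\<in>F. \<Sum>j\<in>F. (c i * d j) * (Y i \<omega> * Y j \<omega>))"
    by (simp add: sum_product mult_ac)
  also have "\<dots> = (\<Sum>i\<in>F. \<Sum>j\<in>F. (c i * d j) * (if i = j then 1 else 0))"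
    using indep_std_normal_product[OF normal indep] F
    by (simp add: Bochner_Integration.integral_sum integrable_sum subset_eq)
  also have "\<dots> = (\<Sum>i\<in>F. c i * d i)"
    using F(1) by (simp add: if_distrib cong: if_cong)
  finally show "expectation (\<lambda>\<omega>. (\<Sum>i\<in>F. c i * Y i \<omega>) * (\<Sum>i\<in>F. d i * Y i \<omega>))
      = (\<Sum>i\<in>F. c i * d i)" .
qed

end

section \<open>Finitely supported functions\<close>

definition finite_support :: "('a \<Rightarrow> 'b::zero) \<Rightarrow> bool" where
  "finite_support f \<longleftrightarrow> finite {x. f x \<noteq> 0}"

lemma finite_support_mult_left:
  "finite_support f \<Longrightarrow> finite_support (\<lambda>x. f x * (g x :: 'b::mult_zero))"
  unfolding finite_support_def by (rule finite_subset[of _ "{x. f x \<noteq> 0}"]) auto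

lemma finite_support_mult_right:
  "finite_support g \<Longrightarrow> finite_support (\<lambda>x. f x * (g x :: 'b::mult_zero))"
  unfolding finite_support_def by (rule finite_subset[of _ "{x. g x \<noteq> 0}"]) auto

lemma finite_support_sum:
  assumes "finite P" "\<And>p. p \<in> P \<Longrightarrow> finite_support (f p)"
  shows "finite_support (\<lambda>x. \<Sum>p\<in>P. (f p x :: 'b::comm_monoid_add))"
proof -
  have "{x. (\<Sum>p\<in>P. f p x) \<noteq> 0} \<subseteq> (\<Union>p\<in>P. {x. f p x \<noteq> 0})"
    by (auto elim: sum.not_neutral_contains_not_neutral)
  then show ?thesis using assms unfolding finite_support_def by (auto intro: finite_subset)
qed

lemma finite_support_add:
  "finite_support f \<Longrightarrow> finite_support g \<Longrightarrow> finite_support (\<lambda>x. f x + (g x :: 'b::comm_monoid_add))"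
  unfolding finite_support_def by (rule finite_subset[of _ "{x. f x \<noteq> 0} \<union> {x. g x \<noteq> 0}"]) auto

lemma finite_support_shift:
  assumes "finite_support f"
  shows "finite_support (\<lambda>x. f (x + (c :: 'a::group_add)))"
proof -
  have "{x. f (x + c) \<noteq> 0} = (\<lambda>y. y - c) ` {x. f x \<noteq> 0}"
    by (auto intro: image_eqI[of _ _ "_ + c"])
  then show ?thesis using assms unfolding finite_support_def by simp
qed

lemma Sum_any_add:
  "finite_support f \<Longrightarrow> finite_support g \<Longrightarrow> Sum_any (\<lambda>x. f x + g x) = Sum_any f + Sum_any g"
  unfolding finite_support_def by (rule Sum_any.distrib)

lemma Sum_any_cmult:
  "finite_support f \<Longrightarrow> Sum_any (\<lambda>x. c * f x) = c * (Sum_any f :: 'b::semiring_0)"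
  unfolding finite_support_def by (rule Sum_any_right_distrib[symmetric])

lemma Sum_any_sum:
  "finite P \<Longrightarrow> (\<And>p. p \<in> P \<Longrightarrow> finite_support (f p)) \<Longrightarrow>
   Sum_any (\<lambda>x. \<Sum>p\<in>P. f p x) = (\<Sum>p\<in>P. Sum_any (f p) :: 'b::comm_monoid_add)"
proof (induction P rule: finite_induct)
  case (insert p P)
  then show ?case by (simp add: Sum_any_add finite_support_sum)
qed simp

lemma Sum_any_shift: "Sum_any (\<lambda>x. f (x + (c :: 'a::group_add))) = Sum_any f"
  by (rule Sum_any.reindex_cong[of "\<lambda>x. x + c", symmetric])
     (auto simp: bij_def inj_def surj_def intro!: exI[of _ "_ - c"])

lemma Sum_any_nonneg: "(\<And>x. 0 \<le> f x) \<Longrightarrow> 0 \<le> (Sum_any f :: 'b::ordered_comm_monoid_add)"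
  by (simp add: Sum_any.expand_set sum_nonneg)

section \<open>The projected walk\<close>

text \<open>\<open>walk m\<close> is the law after \<open>m\<close> steps of the random walk on \<open>\<int>\<^sup>2\<close> whose steps
  \<open>(1,0)\<close>, \<open>(0,1)\<close>, \<open>(0,0)\<close> each have probability \<open>1/3\<close>: the image of a downward path in
  \<open>HS\<^sub>3\<close> under the projection \<open>(x,y,z) \<mapsto> (x,y)\<close>.\<close>

definition step :: "nat \<Rightarrow> int \<times> int" where
  "step i = (if i = 0 then (1, 0) else if i = 1 then (0, 1) else (0, 0))"

primrec walk :: "nat \<Rightarrow> int \<times> int \<Rightarrow> real" where
  "walk 0 x = (if x = 0 then 1 else 0)"
| "walk (Suc m) x = (\<Sum>i\<in>{0,1,2}. walk m (x - step i)) / 3"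

definition walk_expect :: "nat \<Rightarrow> (int \<times> int \<Rightarrow> real) \<Rightarrow> real" where
  "walk_expect m g = Sum_any (\<lambda>x. walk m x * g x)"

lemma walk_nonneg: "0 \<le> walk m x"
  by (induction m arbitrary: x) (auto intro!: sum_nonneg)

lemma walk_support: "walk m x \<noteq> 0 \<Longrightarrow> x \<in> {0..int m} \<times> {0..int m}"
proof (induction m arbitrary: x)
  case (Suc m)
  then have "walk m (x - step 0) \<noteq> 0 \<or> walk m (x - step 1) \<noteq> 0 \<or> walk m (x - step 2) \<noteq> 0"
    by auto
  then show ?case using Suc.IH by (cases x) (auto simp: step_def, fastforce+)
qed (auto split: if_splits simp: zero_prod_def)

lemma finite_support_walk: "finite_support (walk m)"
  unfolding finite_support_def
  by (rule finite_subset[of _ "{0..int m} \<times> {0..int m}"]) (auto dest: walk_support)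

lemma walk_expect_eq_sum:
  "walk_expect m g = (\<Sum>x\<in>{0..int m} \<times> {0..int m}. walk m x * g x)"
  unfolding walk_expect_def by (rule Sum_any.expand_superset) (auto dest: walk_support)

lemma walk_expect_0: "walk_expect 0 g = g 0"
proof -
  have "walk_expect 0 g = (\<Sum>x\<in>{0}. walk 0 x * g x)"
    unfolding walk_expect_def by (rule Sum_any.expand_superset) auto
  then show ?thesis by simp
qed

lemma walk_expect_add: "walk_expect m (\<lambda>x. f x + g x) = walk_expect m f + walk_expect m g"
  unfolding walk_expect_def distrib_left
  by (intro Sum_any_add finite_support_mult_left finite_support_walk)

lemma walk_expect_cmult: "walk_expect m (\<lambda>x. c * f x) = c * walk_expect m f"
proof -
  have "walk_expect m (\<lambda>x. c * f x) = Sum_any (\<lambda>x. c * (walk m x * f x))"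
    unfolding walk_expect_def by (simp add: mult.left_commute)
  then show ?thesis
    unfolding walk_expect_def by (simp add: Sum_any_cmult finite_support_mult_left finite_support_walk)
qed

lemma walk_expect_Suc:
  "walk_expect (Suc m) g = (\<Sum>i\<in>{0,1,2}. walk_expect m (\<lambda>y. g (y + step i))) / 3"
proof -
  have "walk_expect (Suc m) g = Sum_any (\<lambda>x. (\<Sum>i\<in>{0,1,2}. walk m (x - step i) * g x) / 3)"
    by (simp only: walk_expect_def walk.simps sum_distrib_right times_divide_eq_left)
  also have "\<dots> = (\<Sum>i\<in>{0,1,2}. Sum_any (\<lambda>x. walk m (x - step i) * g x)) / 3"
  proof -
    have fs: "finite_support (\<lambda>x. walk m (x - step i) * g x)" for i
      using finite_support_shift[OF finite_support_walk, of m "- step i"]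
      by (simp add: finite_support_mult_left)
    have "Sum_any (\<lambda>x. (\<Sum>i\<in>{0,1,2}. walk m (x - step i) * g x) / 3)
        = Sum_any (\<lambda>x. 1/3 * (\<Sum>i\<in>{0,1,2}. walk m (x - step i) * g x))"
      by simp
    also have "\<dots> = 1/3 * Sum_any (\<lambda>x. \<Sum>i\<in>{0,1,2}. walk m (x - step i) * g x)"
      by (intro Sum_any_cmult finite_support_sum fs) simp
    also have "Sum_any (\<lambda>x. \<Sum>i\<in>{0,1,2}. walk m (x - step i) * g x)
        = (\<Sum>i\<in>{0,1,2}. Sum_any (\<lambda>x. walk m (x - step i) * g x))"
      by (rule Sum_any_sum) (simp_all add: fs)
    finally show ?thesis by simp
  qed
  also have "\<dots> = (\<Sum>i\<in>{0,1,2}. walk_expect m (\<lambda>y. g (y + step i))) / 3"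
  proof -
    have "Sum_any (\<lambda>x. walk m (x - step i) * g x) = walk_expect m (\<lambda>y. g (y + step i))" for i
      unfolding walk_expect_def using Sum_any_shift[of "\<lambda>x. walk m (x - step i) * g x" "step i"]
      by simp
    then show ?thesis by simp
  qed
  finally show ?thesis .
qed

lemma walk_expect_const: "walk_expect m (\<lambda>_. c) = c"
  by (induction m) (simp_all add: walk_expect_0 walk_expect_Suc)

lemma walk_expect_sum:
  "finite P \<Longrightarrow> walk_expect m (\<lambda>x. \<Sum>p\<in>P. f p x) = (\<Sum>p\<in>P. walk_expect m (f p))"
  by (induction P rule: finite_induct) (simp_all add: walk_expect_add walk_expect_const)

lemma walk_expect_divide: "walk_expect m (\<lambda>x. f x / c) = walk_expect m f / c"
  using walk_expect_cmult[of m "1 / c" f] by simp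

lemma walk_expect_mono: "(\<And>x. f x \<le> g x) \<Longrightarrow> walk_expect m f \<le> walk_expect m g"
  unfolding walk_expect_eq_sum by (intro sum_mono mult_left_mono walk_nonneg)

lemma walk_expect_additive:
  assumes add: "\<And>x y. \<phi> (x + y) = \<phi> x + \<phi> y"
    and steps: "(\<Sum>i\<in>{0,1,2}. \<phi> (step i)) = 1"
  shows "walk_expect m \<phi> = real m / 3"
proof (induction m)
  case 0
  show ?case using add[of 0 0] by (simp add: walk_expect_0)
next
  case (Suc m)
  have "walk_expect (Suc m) \<phi> = (\<Sum>i\<in>{0,1,2}. m / 3 + \<phi> (step i)) / 3"
    by (simp add: walk_expect_Suc add walk_expect_add walk_expect_const Suc)
  also have "\<dots> = real (Suc m) / 3" using steps by (simp add: sum.distrib)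
  finally show ?case .
qed

lemma walk_expect_additive_variance:
  assumes add: "\<And>x y. \<phi> (x + y) = \<phi> x + \<phi> y"
    and steps: "(\<Sum>i\<in>{0,1,2}. \<phi> (step i)) = 1" "(\<Sum>i\<in>{0,1,2}. (\<phi> (step i))\<^sup>2) = 1"
  shows "walk_expect m (\<lambda>x. (\<phi> x - real m / 3)\<^sup>2) = 2 * real m / 9"
proof (induction m)
  case 0
  show ?case using add[of 0 0] by (simp add: walk_expect_0)
next
  case (Suc m)
  define c where "c i = \<phi> (step i) - 1/3" for i
  have centered: "walk_expect m (\<lambda>y. \<phi> y - m / 3) = 0"
    using walk_expect_add[of m \<phi> "\<lambda>_. - (m / 3)"] walk_expect_additive[OF add steps(1)]
    by (simp add: walk_expect_const)
  have "walk_expect m (\<lambda>y. (\<phi> (y + step i) - Suc m / 3)\<^sup>2)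
      = walk_expect m (\<lambda>y. (\<phi> y - m / 3)\<^sup>2) + (2 * c i * walk_expect m (\<lambda>y. \<phi> y - m / 3) + (c i)\<^sup>2)"
    for i
  proof -
    have "\<And>y. (\<phi> (y + step i) - Suc m / 3)\<^sup>2 = (\<phi> y - m / 3)\<^sup>2 + (2 * c i * (\<phi> y - m / 3) + (c i)\<^sup>2)"
      by (simp add: add c_def power2_eq_square algebra_simps)
    then show ?thesis by (simp only: walk_expect_add walk_expect_cmult walk_expect_const)
  qed
  then have "walk_expect (Suc m) (\<lambda>x. (\<phi> x - Suc m / 3)\<^sup>2) = (\<Sum>i\<in>{0,1,2}. 2 * m / 9 + (c i)\<^sup>2) / 3"
    by (simp add: walk_expect_Suc centered Suc)
  also have "\<dots> = 2 * real (Suc m) / 9"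
    using steps by (simp add: c_def power2_eq_square algebra_simps)
  finally show ?case .
qed

lemma walk_second_moment:
  "walk_expect m (\<lambda>x. (real_of_int (fst x) - real m / 3)\<^sup>2 + (real_of_int (snd x) - real m / 3)\<^sup>2)
    = 4 * real m / 9"
  using walk_expect_additive_variance[of "\<lambda>x. real_of_int (fst x)" m]
    walk_expect_additive_variance[of "\<lambda>x. real_of_int (snd x)" m]
  by (simp add: walk_expect_add step_def)

section \<open>Overlaps of two independent walks\<close>

definition overlap :: "nat \<Rightarrow> int \<times> int \<Rightarrow> real" where
  "overlap m z = walk_expect m (\<lambda>x. walk m (x + z))"

definition shift_sqdist :: "nat \<Rightarrow> int \<times> int \<Rightarrow> real" where
  "shift_sqdist m z = Sum_any (\<lambda>x. (walk m x - walk m (x + z))\<^sup>2)"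

lemma overlap_0: "overlap 0 z = (if z = 0 then 1 else 0)"
  by (simp add: overlap_def walk_expect_0)

lemma overlap_Suc:
  "overlap (Suc m) z = (\<Sum>i\<in>{0,1,2}. \<Sum>j\<in>{0,1,2}. overlap m (z + step i - step j)) / 9"
proof -
  have "overlap (Suc m) z
      = (\<Sum>i\<in>{0,1,2}. walk_expect m (\<lambda>y. (\<Sum>j\<in>{0,1,2}. walk m (y + (z + step i - step j))) / 3)) / 3"
    unfolding overlap_def walk_expect_Suc by (simp add: algebra_simps)
  also have "\<dots> = (\<Sum>i\<in>{0,1,2}. (\<Sum>j\<in>{0,1,2}. overlap m (z + step i - step j)) / 3) / 3"
    by (simp only: walk_expect_divide walk_expect_sum finite_insert finite.emptyI overlap_def)
  finally show ?thesis by (simp add: field_simps)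
qed

lemma overlap_uminus: "overlap m (- z) = overlap m z"
  unfolding overlap_def walk_expect_def
  using Sum_any_shift[of "\<lambda>x. walk m x * walk m (x - z)" z] by (simp add: mult.commute)

lemma overlap_nonneg: "0 \<le> overlap m z"
  unfolding overlap_def walk_expect_def by (intro Sum_any_nonneg mult_nonneg_nonneg walk_nonneg)

lemma shift_sqdist_nonneg: "0 \<le> shift_sqdist m z"
  unfolding shift_sqdist_def by (rule Sum_any_nonneg) simp

lemma shift_sqdist_eq: "shift_sqdist m z = 2 * overlap m 0 - 2 * overlap m z"
proof -
  have fs: "finite_support (\<lambda>x. walk m (x + z) * walk m (x + z))"
    by (intro finite_support_mult_left finite_support_shift finite_support_walk)
  have "shift_sqdist m z
      = Sum_any (\<lambda>x. walk m x * (walk m x - 2 * walk m (x + z)) + walk m (x + z) * walk m (x + z))"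
    unfolding shift_sqdist_def by (simp add: power2_eq_square algebra_simps)
  also have "\<dots> = walk_expect m (\<lambda>x. walk m x - 2 * walk m (x + z)) + overlap m 0"
    using Sum_any_add[OF finite_support_mult_left[OF finite_support_walk] fs]
      Sum_any_shift[of "\<lambda>x. walk m x * walk m x" z]
    by (simp add: walk_expect_def overlap_def)
  also have "\<dots> = 2 * overlap m 0 - 2 * overlap m z"
  proof -
    have "walk_expect m (\<lambda>x. walk m x - 2 * walk m (x + z))
        = walk_expect m (\<lambda>x. walk m (x + 0) + (- 2) * walk m (x + z))"
      by simp
    then show ?thesis by (simp only: walk_expect_add walk_expect_cmult overlap_def)
  qed
  finally show ?thesis .
qed

lemma shift_sqdist_uminus: "shift_sqdist m (- z) = shift_sqdist m z"
  by (simp add: shift_sqdist_eq overlap_uminus)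

lemma overlap_le_overlap_0: "overlap m z \<le> overlap m 0"
  using shift_sqdist_eq[of m z] shift_sqdist_nonneg[of m z] by simp

lemma overlap_diff_Suc:
  "overlap m 0 - overlap (Suc m) 0
    = (shift_sqdist m (1, -1) + shift_sqdist m (1, 0) + shift_sqdist m (0, 1)) / 9"
proof -
  have "overlap m (-1, 1) = overlap m (1, -1)" "overlap m (-1, 0) = overlap m (1, 0)"
    "overlap m (0, -1) = overlap m (0, 1)"
    using overlap_uminus[of m "(1, -1)"] overlap_uminus[of m "(1, 0)"] overlap_uminus[of m "(0, 1)"]
    by simp_all
  then have "overlap (Suc m) 0 = (3 * overlap m 0 + 2 * overlap m (1, -1) + 2 * overlap m (1, 0)
      + 2 * overlap m (0, 1)) / 9"
    unfolding overlap_Suc by (simp add: step_def zero_prod_def)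
  then show ?thesis by (simp add: shift_sqdist_eq)
qed

lemma sqrt_shift_sqdist_add:
  "sqrt (shift_sqdist m (z + w)) \<le> sqrt (shift_sqdist m z) + sqrt (shift_sqdist m w)"
proof -
  define f where "f x = walk m x - walk m (x + z)" for x
  define g where "g x = walk m (x + z) - walk m (x + z + w)" for x
  define A where "A = {x. walk m x \<noteq> 0} \<union> {x. walk m (x + z) \<noteq> 0} \<union> {x. walk m (x + z + w) \<noteq> 0}"
  have "finite A"
    using finite_support_walk[of m] finite_support_shift[OF finite_support_walk, of m z]
      finite_support_shift[OF finite_support_walk, of m "z + w"]
    unfolding A_def finite_support_def by (simp add: add.assoc)
  then have Sum_any_A: "Sum_any h = sum h A" if "\<And>x. x \<notin> A \<Longrightarrow> h x = 0" for h :: "_ \<Rightarrow> real"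
    using that by (intro Sum_any.expand_superset) auto
  have "shift_sqdist m w = Sum_any (\<lambda>x. (walk m (x + z) - walk m (x + z + w))\<^sup>2)"
    unfolding shift_sqdist_def using Sum_any_shift[of "\<lambda>x. (walk m x - walk m (x + w))\<^sup>2" z]
    by (simp add: add.commute add.left_commute)
  then have "shift_sqdist m w = (\<Sum>x\<in>A. (g x)\<^sup>2)"
    by (subst (asm) Sum_any_A) (auto simp: A_def g_def)
  moreover have "shift_sqdist m z = (\<Sum>x\<in>A. (f x)\<^sup>2)"
    unfolding shift_sqdist_def f_def by (subst Sum_any_A) (auto simp: A_def)
  moreover have "shift_sqdist m (z + w) = (\<Sum>x\<in>A. (f x + g x)\<^sup>2)"
    unfolding shift_sqdist_def f_def g_def by (subst Sum_any_A) (auto simp: A_def add.assoc)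
  ultimately show ?thesis using L2_set_triangle_ineq[of f g A] by (simp add: L2_set_def)
qed

lemma sqrt_shift_sqdist_scale:
  "sqrt (shift_sqdist m (k * a, k * b)) \<le> real_of_int \<bar>k\<bar> * sqrt (shift_sqdist m (a, b))"
proof -
  have nat_case: "sqrt (shift_sqdist m (int n * a, int n * b)) \<le> n * sqrt (shift_sqdist m (a, b))"
    for n :: nat
  proof (induction n)
    case 0
    then show ?case by (simp add: shift_sqdist_eq flip: zero_prod_def)
  next
    case (Suc n)
    have "(int (Suc n) * a, int (Suc n) * b) = (int n * a, int n * b) + (a, b)"
      by (simp add: algebra_simps)
    then show ?case
      using sqrt_shift_sqdist_add[of m "(int n * a, int n * b)" "(a, b)"] Suc by (simp add: algebra_simps)
  qed
  show ?thesis
  proof (cases "k \<ge> 0")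
    case True
    then show ?thesis using nat_case[of "nat k"] by simp
  next
    case False
    have "(k * a, k * b) = - (int (nat (- k)) * a, int (nat (- k)) * b)" using False by simp
    then show ?thesis
      using nat_case[of "nat (- k)"] shift_sqdist_uminus[of m "(k * a, k * b)"] False by simp
  qed
qed

lemma shift_sqdist_le:
  "shift_sqdist m (a, b) \<le> (real_of_int (\<bar>a\<bar> + \<bar>b\<bar>))\<^sup>2 * (shift_sqdist m (1, 0) + shift_sqdist m (0, 1))"
proof -
  define x y where "x = real_of_int \<bar>a\<bar>" and "y = real_of_int \<bar>b\<bar>"
  define s1 s2 where "s1 = sqrt (shift_sqdist m (1, 0))" and "s2 = sqrt (shift_sqdist m (0, 1))"
  have nonneg: "0 \<le> x" "0 \<le> y" "0 \<le> s1" "0 \<le> s2"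
    unfolding x_def y_def s1_def s2_def by (simp_all add: shift_sqdist_nonneg)
  have "sqrt (shift_sqdist m (a, b))
      \<le> sqrt (shift_sqdist m (a * 1, a * 0)) + sqrt (shift_sqdist m (b * 0, b * 1))"
    using sqrt_shift_sqdist_add[of m "(a, 0)" "(0, b)"] by simp
  also have "\<dots> \<le> x * s1 + y * s2"
    unfolding x_def y_def s1_def s2_def by (intro add_mono sqrt_shift_sqdist_scale)
  finally have "(sqrt (shift_sqdist m (a, b)))\<^sup>2 \<le> (x * s1 + y * s2)\<^sup>2"
    by (intro power_mono) (simp_all add: shift_sqdist_nonneg)
  also have "\<dots> \<le> (x + y)\<^sup>2 * (s1\<^sup>2 + s2\<^sup>2)"
  proof -
    have "0 \<le> (x * s2)\<^sup>2 + (y * s1)\<^sup>2 + 2 * x * y * (s1 - s2)\<^sup>2 + 2 * x * y * s1 * s2"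
      using nonneg by (intro add_nonneg_nonneg) auto
    also have "\<dots> = (x + y)\<^sup>2 * (s1\<^sup>2 + s2\<^sup>2) - (x * s1 + y * s2)\<^sup>2"
      by (simp add: power2_eq_square algebra_simps)
    finally show ?thesis by simp
  qed
  finally show ?thesis
    unfolding x_def y_def s1_def s2_def by (simp add: shift_sqdist_nonneg)
qed

lemma walk_mass_sq_le_overlap:
  assumes "finite S"
  shows "(\<Sum>x\<in>S. walk m x)\<^sup>2 \<le> card S * overlap m 0"
proof -
  have "overlap m 0 = Sum_any (\<lambda>x. (walk m x)\<^sup>2)"
    by (simp add: overlap_def walk_expect_def power2_eq_square)
  also have "\<dots> = (\<Sum>x\<in>S \<union> {0..int m} \<times> {0..int m}. (walk m x)\<^sup>2)"
    by (rule Sum_any.expand_superset) (auto dest: walk_support simp: assms)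
  finally have "(\<Sum>x\<in>S. (walk m x)\<^sup>2) \<le> overlap m 0"
    using assms by (auto intro!: sum_mono2)
  then have "real (card S) * (\<Sum>x\<in>S. (walk m x)\<^sup>2) \<le> card S * overlap m 0"
    by (simp add: mult_left_mono)
  then show ?thesis
    using sum_squared_le_sum_of_squares[of "walk m" S] by (simp add: mult.commute)
qed

lemma card_ceiling_floor_le: "a \<le> b \<Longrightarrow> real (card {\<lceil>a\<rceil>..\<lfloor>b\<rfloor>}) \<le> b - a + 1"
  using of_int_floor_le[of b] le_of_int_ceiling[of a]
  by (cases "\<lceil>a\<rceil> \<le> \<lfloor>b\<rfloor>") (simp_all, linarith)

text \<open>Chebyshev's inequality for the two coordinates.\<close>

lemma walk_mass_near_mean:
  assumes "1 \<le> m"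
  defines "I \<equiv> {\<lceil>real m / 3 - sqrt m\<rceil>..\<lfloor>real m / 3 + sqrt m\<rfloor>}"
  shows "5 / 9 \<le> (\<Sum>x\<in>I \<times> I. walk m x)"
proof -
  define c where "c = real m / 3"
  define u where "u x = (real_of_int (fst x) - c)\<^sup>2 + (real_of_int (snd x) - c)\<^sup>2" for x
  have "m > 0" using assms by simp
  have inside: "x \<in> I \<times> I" if "u x \<le> m" for x
  proof -
    have "(real_of_int (fst x) - c)\<^sup>2 \<le> m" "(real_of_int (snd x) - c)\<^sup>2 \<le> m"
      using that unfolding u_def by (smt (verit) zero_le_power2)+
    then have "\<bar>real_of_int (fst x) - c\<bar> \<le> sqrt m" "\<bar>real_of_int (snd x) - c\<bar> \<le> sqrt m"
      by (metis real_sqrt_abs real_sqrt_le_mono)+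
    then show ?thesis
      unfolding I_def c_def by (auto simp: mem_Times_iff ceiling_le_iff le_floor_iff abs_le_iff)
  qed
  have "5 / 9 = walk_expect m (\<lambda>x. 1 + (- 1 / m) * u x)"
    using walk_second_moment[of m] \<open>m > 0\<close>
    by (simp only: walk_expect_add walk_expect_cmult walk_expect_const u_def c_def) simp
  also have "\<dots> \<le> walk_expect m (\<lambda>x. if x \<in> I \<times> I then 1 else 0)"
  proof (rule walk_expect_mono)
    fix x
    have "0 \<le> u x" by (simp add: u_def)
    then show "1 + (- 1 / m) * u x \<le> (if x \<in> I \<times> I then 1 else 0)"
      using inside[of x] \<open>m > 0\<close> by (auto simp: field_simps) (meson linorder_le_cases)
  qed
  also have "\<dots> = (\<Sum>x\<in>I \<times> I. walk m x)"
    unfolding walk_expect_def by (subst Sum_any.expand_superset[of "I \<times> I"]) (auto simp: I_def)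
  finally show ?thesis .
qed

lemma overlap_0_lower_bound:
  assumes "1 \<le> m"
  shows "1 / (30 * real m) \<le> overlap m 0"
proof -
  define I where "I = {\<lceil>real m / 3 - sqrt m\<rceil>..\<lfloor>real m / 3 + sqrt m\<rfloor>}"
  have "1 \<le> sqrt (real m)" using assms by simp
  moreover have "real (card I) \<le> 2 * sqrt m + 1"
    using card_ceiling_floor_le[of "real m / 3 - sqrt m" "real m / 3 + sqrt m"]
    unfolding I_def by simp
  ultimately have "real (card I) \<le> 3 * sqrt m" by linarith
  then have card: "real (card (I \<times> I)) \<le> 9 * m"
    using mult_mono[of "real (card I)" "3 * sqrt m" "real (card I)" "3 * sqrt m"]
    by (simp add: card_cartesian_product)
  have "(5 / 9)\<^sup>2 \<le> (\<Sum>x\<in>I \<times> I. walk m x)\<^sup>2"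
    using walk_mass_near_mean[OF assms] unfolding I_def by (intro power_mono) auto
  also have "\<dots> \<le> card (I \<times> I) * overlap m 0"
    by (rule walk_mass_sq_le_overlap) (simp add: I_def)
  also have "\<dots> \<le> 9 * m * overlap m 0"
    using card overlap_nonneg by (intro mult_right_mono)
  finally show ?thesis using assms by (simp add: field_simps power2_eq_square)
qed

definition green :: "nat \<Rightarrow> int \<times> int \<Rightarrow> real" where
  "green t z = (\<Sum>m<t. overlap m z)"

lemma green_0_lower_bound:
  assumes "1 \<le> t"
  shows "ln (real t) / 30 \<le> green t 0"
proof -
  have harm: "harm n / 30 \<le> green (Suc n) 0" for n
  proof (induction n)
    case 0
    then show ?case by (simp add: green_def overlap_0 harm_def)
  next
    case (Suc n)
    have "harm (Suc n) / 30 = harm n / 30 + 1 / (30 * real (Suc n))"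
      by (simp add: harm_Suc add_divide_distrib inverse_eq_divide)
    moreover have "green (Suc (Suc n)) 0 = green (Suc n) 0 + overlap (Suc n) 0"
      by (simp add: green_def)
    moreover have "1 / (30 * real (Suc n)) \<le> overlap (Suc n) 0"
      by (rule overlap_0_lower_bound) simp
    ultimately show ?case using Suc.IH by linarith
  qed
  obtain n where "t = Suc n" using assms by (cases t) auto
  then show ?thesis
    using ln_le_harm[of n] harm[of n] by (simp add: add.commute)
qed

lemma sum_shift_sqdist_units_le: "(\<Sum>m<t. shift_sqdist m (1, 0) + shift_sqdist m (0, 1)) \<le> 9"
proof -
  have "(\<Sum>m<t. shift_sqdist m (1, 0) + shift_sqdist m (0, 1)) \<le> (\<Sum>m<t. 9 * (overlap m 0 - overlap (Suc m) 0))"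
  proof (rule sum_mono)
    fix m
    show "shift_sqdist m (1, 0) + shift_sqdist m (0, 1) \<le> 9 * (overlap m 0 - overlap (Suc m) 0)"
      using overlap_diff_Suc[of m] shift_sqdist_nonneg[of m "(1, -1)"] by simp
  qed
  also have "\<dots> = 9 * (overlap 0 0 - overlap t 0)"
    unfolding sum_distrib_left[symmetric] sum_lessThan_telescope'[of "\<lambda>m. overlap m 0" t] ..
  also have "\<dots> \<le> 9" using overlap_nonneg[of t 0] by (simp add: overlap_0)
  finally show ?thesis .
qed

lemma green_le_green_0: "green t z \<le> green t 0"
  unfolding green_def by (intro sum_mono overlap_le_overlap_0)

text \<open>Uniform in \<open>t\<close>, since the decrements \<open>overlap m 0 - overlap (Suc m) 0\<close> telescope.\<close>

lemma green_diff_le: "green t 0 - green t (a, b) \<le> 9 / 2 * (real_of_int (\<bar>a\<bar> + \<bar>b\<bar>))\<^sup>2"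
proof -
  have "green t 0 - green t (a, b) = (\<Sum>m<t. shift_sqdist m (a, b)) / 2"
    by (simp add: green_def shift_sqdist_eq sum_subtractf sum_divide_distrib flip: sum_distrib_left)
  also have "\<dots> \<le> (\<Sum>m<t. (real_of_int (\<bar>a\<bar> + \<bar>b\<bar>))\<^sup>2 * (shift_sqdist m (1, 0) + shift_sqdist m (0, 1))) / 2"
    by (intro divide_right_mono sum_mono shift_sqdist_le) simp
  also have "\<dots> = (real_of_int (\<bar>a\<bar> + \<bar>b\<bar>))\<^sup>2 * (\<Sum>m<t. shift_sqdist m (1, 0) + shift_sqdist m (0, 1)) / 2"
    by (simp only: sum_distrib_left)
  also have "\<dots> \<le> 9 / 2 * (real_of_int (\<bar>a\<bar> + \<bar>b\<bar>))\<^sup>2"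
    using mult_left_mono[OF sum_shift_sqdist_units_le[of t] zero_le_power2[of "real_of_int (\<bar>a\<bar> + \<bar>b\<bar>)"]]
    by linarith
  finally show ?thesis .
qed

section \<open>Paths in \<open>HS\<^sub>3\<close>\<close>

text \<open>\<open>path_coef n v e\<close> is the coefficient of the noise \<open>W e\<close> in \<open>X v\<close> after unrolling the
  recursion \<open>n\<close> times; it vanishes outside \<open>path_edges n v\<close>.\<close>

primrec path_coef :: "nat \<Rightarrow> pt \<Rightarrow> pt \<times> pt \<Rightarrow> real" where
  "path_coef 0 v e = 0"
| "path_coef (Suc n) v e =
    (\<Sum>i\<in>{0,1,2}. (if e = (pred_pt v i, v) then 1 else 0) + path_coef n (pred_pt v i) e) / 3"

primrec path_edges :: "nat \<Rightarrow> pt \<Rightarrow> (pt \<times> pt) set" where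
  "path_edges 0 v = {}"
| "path_edges (Suc n) v = (\<Union>i\<in>{0,1,2}. insert (pred_pt v i, v) (path_edges n (pred_pt v i)))"

definition proj :: "pt \<Rightarrow> int \<times> int" where
  "proj v = (case v of (x, y, z) \<Rightarrow> (x, y))"

lemma rank_pred_pt: "rank (pred_pt v i) = rank v - 1"
  by (cases v) (auto simp: rank_def pred_pt_def)

lemma proj_pred_pt: "i \<in> {0,1,2} \<Longrightarrow> proj (pred_pt v i) = proj v - step i"
  by (cases v) (auto simp: proj_def pred_pt_def step_def)

lemma eq_if_rank_proj_eq: "rank u = rank v \<Longrightarrow> proj u = proj v \<Longrightarrow> u = v"
  by (cases u; cases v) (auto simp: rank_def proj_def)

lemma finite_path_edges: "finite (path_edges n v)"
  by (induction n arbitrary: v) auto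

lemma path_coef_eq_0: "e \<notin> path_edges n v \<Longrightarrow> path_coef n v e = 0"
  by (induction n arbitrary: v) auto

lemma finite_support_path_coef: "finite_support (path_coef n v)"
  unfolding finite_support_def
  by (rule finite_subset[OF _ finite_path_edges[of n v]]) (use path_coef_eq_0 in blast)

lemma path_edges_rank_le: "e \<in> path_edges n v \<Longrightarrow> rank (snd e) \<le> rank v"
proof (induction n arbitrary: v)
  case (Suc n)
  then obtain i where "e = (pred_pt v i, v) \<or> e \<in> path_edges n (pred_pt v i)" by auto
  then show ?case using Suc.IH[of "pred_pt v i"] rank_pred_pt[of v i] by auto
qed simp

lemma path_edges_subset_covers: "rank v = int n \<Longrightarrow> path_edges n v \<subseteq> covers"
proof (induction n arbitrary: v)
  case (Suc n)
  then have rank: "rank (pred_pt v i) = int n" for i by (simp add: rank_pred_pt)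
  have "(pred_pt v i, v) \<in> covers" if "i \<in> {0,1,2}" for i
  proof -
    have "i < 3" using that by auto
    then show ?thesis using rank[of i] unfolding covers_def by auto
  qed
  then show ?case using Suc.IH[OF rank] by auto
qed simp

lemma sum_pred_pt_edge_eq:
  "(\<Sum>i\<in>{0,1,2}. \<Sum>j\<in>{0,1,2}. if (pred_pt u i, u) = (pred_pt v j, v) then 1 else 0 :: real)
    = (if u = v then 3 else 0)"
  by (cases v) (auto simp: pred_pt_def)

lemma sum_green_steps:
  "(\<Sum>i\<in>{0,1,2}. \<Sum>j\<in>{0,1,2}. green n (z - step i + step j)) = 9 * (green (Suc n) z - overlap 0 z)"
proof -
  have "(\<Sum>i\<in>{0,1,2}. \<Sum>j\<in>{0,1,2}. green n (z - step i + step j))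
      = (\<Sum>m<n. \<Sum>j\<in>{0,1,2}. \<Sum>i\<in>{0,1,2}. overlap m (z + step j - step i))"
    unfolding green_def by (simp add: sum.swap[of _ "{..<n}"] algebra_simps)
  also have "\<dots> = 9 * (\<Sum>m<n. overlap (Suc m) z)"
    by (subst sum_distrib_left, intro sum.cong refl) (simp add: overlap_Suc)
  also have "\<dots> = 9 * (green (Suc n) z - overlap 0 z)"
    by (simp only: green_def sum.lessThan_Suc_shift) simp
  finally show ?thesis .
qed

lemma finite_support_indicator_eq: "finite_support (\<lambda>e. if e = a then 1 else 0 :: real)"
  unfolding finite_support_def by simp

lemma Sum_any_indicator_eq_mult: "Sum_any (\<lambda>e. (if e = a then 1 else 0) * f e) = (f a :: real)"
  by (simp add: if_distrib[of "\<lambda>x. x * _"] cong: if_cong)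

text \<open>The new edges \<open>(pred_pt u i, u)\<close> lie above every edge of a path from a point of lower
  rank, so only the diagonal and the old path coefficients contribute.\<close>

lemma Sum_any_path_coef_Suc_term:
  fixes u v :: pt and i j :: nat
  assumes "rank u = int (Suc n)" "rank v = int (Suc n)"
  defines "a \<equiv> (pred_pt u i, u)" and "b \<equiv> (pred_pt v j, v)"
  shows "Sum_any (\<lambda>e. ((if e = a then 1 else 0) + path_coef n (pred_pt u i) e)
      * ((if e = b then 1 else 0) + path_coef n (pred_pt v j) e))
    = (if a = b then 1 else 0) + Sum_any (\<lambda>e. path_coef n (pred_pt u i) e * path_coef n (pred_pt v j) e)"
proof -
  define f g where "f = path_coef n (pred_pt u i)" and "g = path_coef n (pred_pt v j)"
  have ga: "g a = 0"
    using path_edges_rank_le[of a n "pred_pt v j"] assms by (auto simp: rank_pred_pt g_def intro: path_coef_eq_0)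
  have fb: "f b = 0"
    using path_edges_rank_le[of b n "pred_pt u i"] assms by (auto simp: rank_pred_pt f_def intro: path_coef_eq_0)
  have fs: "finite_support f" "finite_support g"
    unfolding f_def g_def by (simp_all add: finite_support_path_coef)
  have "Sum_any (\<lambda>e. ((if e = a then 1 else 0) + f e) * ((if e = b then 1 else 0) + g e))
      = Sum_any (\<lambda>e. (if e = a then 1 else 0) * ((if e = b then 1 else 0) + g e) + (if e = b then 1 else 0) * f e + f e * g e)"
    by (simp add: algebra_simps)
  also have "\<dots> = ((if a = b then 1 else 0) + g a) + f b + Sum_any (\<lambda>e. f e * g e)"
    using fs by (simp add: Sum_any_add Sum_any_indicator_eq_mult finite_support_add finite_support_mult_left
        finite_support_mult_right finite_support_indicator_eq)
  finally show ?thesis using ga fb unfolding f_def g_def by simp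
qed

lemma Sum_any_path_coef_Suc_mult:
  assumes "rank u = int (Suc n)" "rank v = int (Suc n)"
  shows "Sum_any (\<lambda>e. path_coef (Suc n) u e * path_coef (Suc n) v e)
    = (\<Sum>i\<in>{0,1,2}. \<Sum>j\<in>{0,1,2}. (if (pred_pt u i, u) = (pred_pt v j, v) then 1 else 0)
        + Sum_any (\<lambda>e. path_coef n (pred_pt u i) e * path_coef n (pred_pt v j) e)) / 9"
proof -
  define c where "c w i e = (if e = (pred_pt w i, w) then 1 else 0) + path_coef n (pred_pt w i) e" for w i e
  have fs: "finite_support (\<lambda>e. c u i e * c v j e)" for i j
    unfolding c_def
    by (intro finite_support_mult_left finite_support_add finite_support_indicator_eq finite_support_path_coef)
  have "Sum_any (\<lambda>e. path_coef (Suc n) u e * path_coef (Suc n) v e)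
      = Sum_any (\<lambda>e. 1 / 9 * (\<Sum>i\<in>{0,1,2}. \<Sum>j\<in>{0,1,2}. c u i e * c v j e))"
    unfolding path_coef.simps c_def[symmetric]
    by (intro Sum_any.cong) (subst sum_product[symmetric], simp)
  also have "\<dots> = (\<Sum>i\<in>{0,1,2}. \<Sum>j\<in>{0,1,2}. Sum_any (\<lambda>e. c u i e * c v j e)) / 9"
    using fs by (simp only: Sum_any_cmult Sum_any_sum finite_support_sum finite_insert finite.emptyI)
  also have "\<dots> = (\<Sum>i\<in>{0,1,2}. \<Sum>j\<in>{0,1,2}. (if (pred_pt u i, u) = (pred_pt v j, v) then 1 else 0)
        + Sum_any (\<lambda>e. path_coef n (pred_pt u i) e * path_coef n (pred_pt v j) e)) / 9"
    unfolding c_def Sum_any_path_coef_Suc_term[OF assms] ..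
  finally show ?thesis .
qed

lemma path_coef_inner:
  "rank u = int n \<Longrightarrow> rank v = int n \<Longrightarrow>
    Sum_any (\<lambda>e. path_coef n u e * path_coef n v e) = green n (proj u - proj v) / 3"
proof (induction n arbitrary: u v)
  case 0
  then show ?case by (simp add: green_def)
next
  case (Suc n)
  define z where "z = proj u - proj v"
  have IH: "Sum_any (\<lambda>e. path_coef n (pred_pt u i) e * path_coef n (pred_pt v j) e)
      = green n (z - step i + step j) / 3" if "i \<in> {0,1,2}" "j \<in> {0,1,2}" for i j
    using Suc.IH[of "pred_pt u i" "pred_pt v j"] Suc.prems proj_pred_pt[OF that(1), of u]
      proj_pred_pt[OF that(2), of v]
    by (simp add: rank_pred_pt z_def algebra_simps)
  have "Sum_any (\<lambda>e. path_coef (Suc n) u e * path_coef (Suc n) v e)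
      = (\<Sum>i\<in>{0,1,2}. \<Sum>j\<in>{0,1,2}.
          (if (pred_pt u i, u) = (pred_pt v j, v) then 1 else 0) + green n (z - step i + step j) / 3) / 9"
    unfolding Sum_any_path_coef_Suc_mult[OF Suc.prems]
    by (intro arg_cong[where f="\<lambda>x. x / 9"] sum.cong refl) (simp add: IH)
  also have "\<dots> = (3 * overlap 0 z + 9 * (green (Suc n) z - overlap 0 z) / 3) / 9"
  proof -
    have "(if u = v then 3 else 0) = 3 * overlap 0 z"
      using eq_if_rank_proj_eq[of u v] Suc.prems by (auto simp: overlap_0 z_def)
    then show ?thesis
      by (simp only: sum.distrib sum_pred_pt_edge_eq sum_divide_distrib[symmetric] sum_green_steps)
  qed
  also have "\<dots> = green (Suc n) z / 3"
    by (simp add: field_simps)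
  finally show ?case unfolding z_def .
qed

section \<open>Quadratic forms in the cumulative overlap\<close>

lemma overlap_form_nonneg:
  fixes A :: "'p \<Rightarrow> real" and v :: "'p \<Rightarrow> int \<times> int"
  assumes "finite P"
  shows "0 \<le> (\<Sum>p\<in>P. \<Sum>p'\<in>P. A p * A p' * overlap m (v p - v p'))"
proof -
  define f where "f p p' x = A p * A p' * (walk m (x - v p) * walk m (x - v p'))" for p p' x
  have fs: "finite_support (f p p')" for p p'
    unfolding f_def using finite_support_shift[OF finite_support_walk, of m "- v p"]
    by (intro finite_support_mult_right finite_support_mult_left) simp
  have "0 \<le> Sum_any (\<lambda>x. (\<Sum>p\<in>P. A p * walk m (x - v p))\<^sup>2)"
    by (rule Sum_any_nonneg) simp
  also have "\<dots> = Sum_any (\<lambda>x. \<Sum>p\<in>P. \<Sum>p'\<in>P. f p p' x)"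
    unfolding f_def by (rule Sum_any.cong) (simp add: power2_eq_square sum_product mult_ac)
  also have "\<dots> = (\<Sum>p\<in>P. \<Sum>p'\<in>P. Sum_any (f p p'))"
    using assms fs by (simp add: Sum_any_sum finite_support_sum)
  also have "\<dots> = (\<Sum>p\<in>P. \<Sum>p'\<in>P. A p * A p' * overlap m (v p - v p'))"
  proof (intro sum.cong refl)
    fix p p'
    have "Sum_any (\<lambda>x. walk m (x - v p) * walk m (x - v p')) = overlap m (v p - v p')"
      unfolding overlap_def walk_expect_def
      using Sum_any_shift[of "\<lambda>x. walk m (x - v p) * walk m (x - v p')" "v p"]
      by (simp add: algebra_simps)
    then show "Sum_any (f p p') = A p * A p' * overlap m (v p - v p')"
      unfolding f_def
      using Sum_any_cmult[of "\<lambda>x. walk m (x - v p) * walk m (x - v p')" "A p * A p'"]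
        finite_support_mult_left[OF finite_support_shift[OF finite_support_walk, of m "- v p"]]
      by (simp add: mult.assoc)
  qed
  finally show ?thesis .
qed

lemma green_form_ge_diag:
  fixes A :: "'p \<Rightarrow> real" and v :: "'p \<Rightarrow> int \<times> int"
  assumes "finite P" "inj_on v P" "1 \<le> t"
  shows "(\<Sum>p\<in>P. (A p)\<^sup>2) \<le> (\<Sum>p\<in>P. \<Sum>p'\<in>P. A p * A p' * green t (v p - v p'))"
proof -
  define R where "R m = (\<Sum>p\<in>P. \<Sum>p'\<in>P. A p * A p' * overlap m (v p - v p'))" for m
  have "R 0 = (\<Sum>p\<in>P. \<Sum>p'\<in>P. if p = p' then A p * A p' else 0)"
    unfolding R_def using assms(2) by (intro sum.cong refl) (auto simp: overlap_0 dest: inj_onD)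
  also have "\<dots> = (\<Sum>p\<in>P. (A p)\<^sup>2)"
    using assms(1) by (simp add: power2_eq_square)
  finally have "(\<Sum>p\<in>P. (A p)\<^sup>2) = R 0" ..
  also have "\<dots> \<le> (\<Sum>m<t. R m)"
    using assms(3) overlap_form_nonneg[OF assms(1)]
    by (intro member_le_sum) (auto simp: R_def)
  also have "\<dots> = (\<Sum>p\<in>P. \<Sum>p'\<in>P. A p * A p' * green t (v p - v p'))"
    unfolding R_def green_def by (simp add: sum_distrib_left sum.swap[of _ "{..<t}"])
  finally show ?thesis .
qed

lemma green_form_ge:
  fixes A :: "'p \<Rightarrow> real" and v :: "'p \<Rightarrow> int \<times> int" and D :: real
  assumes "finite P"
    and dist: "\<And>p p'. p \<in> P \<Longrightarrow> p' \<in> P \<Longrightarrow> \<bar>fst (v p - v p')\<bar> + \<bar>snd (v p - v p')\<bar> \<le> D"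
  shows "(\<Sum>p\<in>P. A p)\<^sup>2 * green t 0 - 9 / 2 * D\<^sup>2 * card P * (\<Sum>p\<in>P. (A p)\<^sup>2)
    \<le> (\<Sum>p\<in>P. \<Sum>p'\<in>P. A p * A p' * green t (v p - v p'))"
proof -
  define \<delta> where "\<delta> p p' = green t 0 - green t (v p - v p')" for p p'
  have \<delta>: "\<bar>\<delta> p p'\<bar> \<le> 9 / 2 * D\<^sup>2" if "p \<in> P" "p' \<in> P" for p p'
  proof -
    obtain a b where ab: "v p - v p' = (a, b)" by fastforce
    have "real_of_int (\<bar>a\<bar> + \<bar>b\<bar>) \<le> D" using dist[OF that] ab by simp
    then have "(real_of_int (\<bar>a\<bar> + \<bar>b\<bar>))\<^sup>2 \<le> D\<^sup>2" by (intro power_mono) simp_all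
    then show ?thesis
      using green_diff_le[of t a b] green_le_green_0[of t "(a, b)"] ab by (simp add: \<delta>_def)
  qed
  have "(\<Sum>p\<in>P. \<Sum>p'\<in>P. A p * A p' * \<delta> p p') \<le> (\<Sum>p\<in>P. \<Sum>p'\<in>P. \<bar>A p\<bar> * \<bar>A p'\<bar> * (9 / 2 * D\<^sup>2))"
  proof (intro sum_mono)
    fix p p' assume "p \<in> P" "p' \<in> P"
    have "A p * A p' * \<delta> p p' \<le> \<bar>A p\<bar> * \<bar>A p'\<bar> * \<bar>\<delta> p p'\<bar>"
      by (metis abs_ge_self abs_mult)
    also have "\<dots> \<le> \<bar>A p\<bar> * \<bar>A p'\<bar> * (9 / 2 * D\<^sup>2)"
      using \<delta>[OF \<open>p \<in> P\<close> \<open>p' \<in> P\<close>] by (intro mult_left_mono) simp_all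
    finally show "A p * A p' * \<delta> p p' \<le> \<bar>A p\<bar> * \<bar>A p'\<bar> * (9 / 2 * D\<^sup>2)" .
  qed
  also have "\<dots> = 9 / 2 * D\<^sup>2 * (\<Sum>p\<in>P. \<bar>A p\<bar>)\<^sup>2"
    by (simp add: power2_eq_square sum_product sum_distrib_left mult_ac)
  also have "\<dots> \<le> 9 / 2 * D\<^sup>2 * (card P * (\<Sum>p\<in>P. (A p)\<^sup>2))"
    using sum_squared_le_sum_of_squares[of "\<lambda>p. \<bar>A p\<bar>" P]
    by (intro mult_left_mono) (simp_all add: mult.commute)
  finally have le: "(\<Sum>p\<in>P. \<Sum>p'\<in>P. A p * A p' * \<delta> p p') \<le> 9 / 2 * D\<^sup>2 * card P * (\<Sum>p\<in>P. (A p)\<^sup>2)"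
    by (simp add: mult.assoc)
  have "(\<Sum>p\<in>P. \<Sum>p'\<in>P. A p * A p' * green t (v p - v p'))
      = (\<Sum>p\<in>P. \<Sum>p'\<in>P. A p * A p' * green t 0 - A p * A p' * \<delta> p p')"
    by (simp add: \<delta>_def algebra_simps)
  also have "\<dots> = (\<Sum>p\<in>P. A p)\<^sup>2 * green t 0 - (\<Sum>p\<in>P. \<Sum>p'\<in>P. A p * A p' * \<delta> p p')"
    unfolding sum_subtractf power2_eq_square by (subst sum_product) (simp only: sum_distrib_right)
  finally show ?thesis using le by linarith
qed

lemma green_form_lower_bound:
  fixes A :: "'p \<Rightarrow> real" and v :: "'p \<Rightarrow> int \<times> int" and D :: real
  assumes "finite P" "inj_on v P" "1 \<le> t"
    and "\<And>p p'. p \<in> P \<Longrightarrow> p' \<in> P \<Longrightarrow> \<bar>fst (v p - v p')\<bar> + \<bar>snd (v p - v p')\<bar> \<le> D"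
  shows "(\<Sum>p\<in>P. A p)\<^sup>2 * ln (real t)
    \<le> 30 * (1 + 9 / 2 * D\<^sup>2 * card P) * (\<Sum>p\<in>P. \<Sum>p'\<in>P. A p * A p' * green t (v p - v p'))"
proof -
  define Q where "Q = (\<Sum>p\<in>P. \<Sum>p'\<in>P. A p * A p' * green t (v p - v p'))"
  define c where "c = 9 / 2 * D\<^sup>2 * card P"
  have "(\<Sum>p\<in>P. A p)\<^sup>2 * (ln (real t) / 30) \<le> (\<Sum>p\<in>P. A p)\<^sup>2 * green t 0"
    using green_0_lower_bound[OF assms(3)] by (rule mult_left_mono) simp
  then have "(\<Sum>p\<in>P. A p)\<^sup>2 * ln (real t) \<le> 30 * ((\<Sum>p\<in>P. A p)\<^sup>2 * green t 0)"
    by simp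
  also have "\<dots> \<le> 30 * (Q + c * (\<Sum>p\<in>P. (A p)\<^sup>2))"
  proof -
    have "(\<Sum>p\<in>P. A p)\<^sup>2 * green t 0 - c * (\<Sum>p\<in>P. (A p)\<^sup>2) \<le> Q"
      using green_form_ge[where A=A and v=v and D=D and t=t, OF assms(1,4)]
      unfolding Q_def c_def by (simp add: mult.assoc)
    then show ?thesis by (simp add: algebra_simps)
  qed
  also have "\<dots> \<le> 30 * (Q + c * Q)"
    using green_form_ge_diag[OF assms(1-3), where A=A] unfolding Q_def c_def
    by (intro mult_left_mono add_left_mono) (simp_all add: mult_left_mono)
  finally show ?thesis unfolding Q_def c_def by (simp add: algebra_simps)
qed

section \<open>The Gaussian broadcast model\<close>

locale gaussian_broadcast = prob_space M for M :: "'a measure" +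
  fixes X0 :: "'a \<Rightarrow> real" and W :: "pt \<times> pt \<Rightarrow> 'a \<Rightarrow> real" and X :: "pt \<Rightarrow> 'a \<Rightarrow> real"
  assumes X0_std_normal: "distributed M lborel X0 std_normal_density"
    and W_std_normal: "\<forall>e\<in>covers. distributed M lborel (W e) std_normal_density"
    and indep_noise: "indep_vars (\<lambda>_. borel) (\<lambda>k. case k of None \<Rightarrow> X0 | Some e \<Rightarrow> W e)
      (insert None (Some ` covers))"
    and X_rank_0: "\<forall>v. rank v = 0 \<longrightarrow> X v = X0"
    and X_rank_pos: "\<forall>v. rank v \<ge> 1 \<longrightarrow>
      X v = (\<lambda>\<omega>. (1/3) * (\<Sum>i\<in>{0,1,2::nat}. X (pred_pt v i) \<omega> + W (pred_pt v i, v) \<omega>))"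
begin

lemma X_expansion:
  assumes "rank v = int n" "finite F" "path_edges n v \<subseteq> F"
  shows "X v \<omega> = X0 \<omega> + (\<Sum>e\<in>F. path_coef n v e * W e \<omega>)"
  using assms(1,3)
proof (induction n arbitrary: v)
  case 0
  then have "X v = X0" using X_rank_0 by (metis of_nat_0)
  then show ?case by simp
next
  case (Suc n)
  define h where "h i e = ((if e = (pred_pt v i, v) then 1 else 0) + path_coef n (pred_pt v i) e) * W e \<omega>"
    for i e
  have "X (pred_pt v i) \<omega> + W (pred_pt v i, v) \<omega> = X0 \<omega> + (\<Sum>e\<in>F. h i e)" if "i \<in> {0,1,2}" for i
  proof -
    have "(pred_pt v i, v) \<in> F" "path_edges n (pred_pt v i) \<subseteq> F"
      using that Suc.prems(2) by auto
    then show ?thesis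
      using Suc.IH[of "pred_pt v i"] Suc.prems(1) assms(2) unfolding h_def
      by (simp add: rank_pred_pt distrib_right sum.distrib if_distrib[of "\<lambda>x. x * _"] cong: if_cong)
  qed
  moreover have "1 \<le> rank v" using Suc.prems(1) by simp
  then have "X v = (\<lambda>\<omega>. (1/3) * (\<Sum>i\<in>{0,1,2::nat}. X (pred_pt v i) \<omega> + W (pred_pt v i, v) \<omega>))"
    using X_rank_pos by blast
  ultimately have "X v \<omega> = (\<Sum>i\<in>{0,1,2}. X0 \<omega> + (\<Sum>e\<in>F. h i e)) / 3"
    by simp
  also have "\<dots> = X0 \<omega> + (\<Sum>e\<in>F. (\<Sum>i\<in>{0,1,2}. h i e) / 3)"
    by (simp only: sum.distrib sum.swap[of h F "{0,1,2}"] sum_divide_distrib[symmetric] add_divide_distrib)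
      simp
  also have "\<dots> = X0 \<omega> + (\<Sum>e\<in>F. path_coef (Suc n) v e * W e \<omega>)"
    unfolding h_def path_coef.simps by (simp add: distrib_right)
  finally show ?case .
qed

lemma noise_comb_moments:
  fixes s :: real and b :: "pt \<times> pt \<Rightarrow> real"
  assumes "finite F" "F \<subseteq> covers"
  defines "\<zeta> \<equiv> \<lambda>\<omega>. s * X0 \<omega> + (\<Sum>e\<in>F. b e * W e \<omega>)"
  shows "cov M \<zeta> X0 = s" and "variance \<zeta> = s\<^sup>2 + (\<Sum>e\<in>F. (b e)\<^sup>2)"
proof -
  define Y where "Y = (\<lambda>k. case k of None \<Rightarrow> X0 | Some e \<Rightarrow> W e)"
  define K where "K = insert None (Some ` F)"
  define c where "c k = (case k of None \<Rightarrow> s | Some e \<Rightarrow> b e)" for k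
  define d :: "(pt \<times> pt) option \<Rightarrow> real" where "d k = (case k of None \<Rightarrow> 1 | Some e \<Rightarrow> 0)" for k
  have normal: "distributed M lborel (Y k) std_normal_density" if "k \<in> insert None (Some ` covers)" for k
    using that X0_std_normal W_std_normal by (auto simp: Y_def)
  have indep: "indep_vars (\<lambda>_. borel) Y (insert None (Some ` covers))"
    using indep_noise by (simp add: Y_def)
  have K: "finite K" "K \<subseteq> insert None (Some ` covers)"
    using assms by (auto simp: K_def)
  have sum_K: "(\<Sum>k\<in>K. g k) = g None + (\<Sum>e\<in>F. g (Some e))" for g :: "_ \<Rightarrow> real"
    using assms(1) by (simp add: K_def sum.reindex)
  have \<zeta>_K: "\<zeta> = (\<lambda>\<omega>. \<Sum>k\<in>K. c k * Y k \<omega>)"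
    by (simp add: \<zeta>_def sum_K c_def Y_def)
  have X0_K: "X0 = (\<lambda>\<omega>. \<Sum>k\<in>K. d k * Y k \<omega>)"
    by (simp add: sum_K d_def Y_def)
  note lin = indep_std_normal_lin_comb[OF normal indep K]
  have mean: "expectation \<zeta> = 0" "expectation X0 = 0"
    using lin(1)[of c] lin(1)[of d] by (simp_all add: \<zeta>_K flip: X0_K)
  have "cov M \<zeta> X0 = expectation (\<lambda>\<omega>. (\<Sum>k\<in>K. c k * Y k \<omega>) * (\<Sum>k\<in>K. d k * Y k \<omega>))"
  proof -
    have "(\<lambda>\<omega>. \<zeta> \<omega> * X0 \<omega>) = (\<lambda>\<omega>. (\<Sum>k\<in>K. c k * Y k \<omega>) * (\<Sum>k\<in>K. d k * Y k \<omega>))"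
      by (rule ext) (metis \<zeta>_K X0_K)
    then show ?thesis by (simp add: cov_def mean)
  qed
  also have "\<dots> = (\<Sum>k\<in>K. c k * d k)" by (rule lin(2))
  also have "\<dots> = s" by (simp only: sum_K) (simp add: c_def d_def)
  finally show "cov M \<zeta> X0 = s" .
  have "variance \<zeta> = expectation (\<lambda>\<omega>. (\<Sum>k\<in>K. c k * Y k \<omega>) * (\<Sum>k\<in>K. c k * Y k \<omega>))"
    unfolding mean by (simp add: \<zeta>_K power2_eq_square)
  also have "\<dots> = (\<Sum>k\<in>K. c k * c k)" by (rule lin(2))
  also have "\<dots> = s\<^sup>2 + (\<Sum>e\<in>F. (b e)\<^sup>2)" by (simp only: sum_K) (simp add: c_def power2_eq_square)
  finally show "variance \<zeta> = s\<^sup>2 + (\<Sum>e\<in>F. (b e)\<^sup>2)" .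
qed

lemma lin_comb_moments:
  fixes A :: "'p \<Rightarrow> real" and u :: "'p \<Rightarrow> pt"
  assumes "finite P" and rank: "\<And>p. p \<in> P \<Longrightarrow> rank (u p) = int t"
  defines "\<zeta> \<equiv> \<lambda>\<omega>. \<Sum>p\<in>P. A p * X (u p) \<omega>"
  shows "cov M \<zeta> X0 = (\<Sum>p\<in>P. A p)"
    and "variance \<zeta> = (\<Sum>p\<in>P. A p)\<^sup>2
      + (\<Sum>p\<in>P. \<Sum>p'\<in>P. A p * A p' * green t (proj (u p) - proj (u p'))) / 3"
proof -
  define F where "F = (\<Union>p\<in>P. path_edges t (u p))"
  define b where "b e = (\<Sum>p\<in>P. A p * path_coef t (u p) e)" for e
  have F: "finite F" "F \<subseteq> covers"
    using assms(1) path_edges_subset_covers[OF rank] by (auto simp: F_def finite_path_edges)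
  have edges: "path_edges t (u p) \<subseteq> F" if "p \<in> P" for p
    using that by (auto simp: F_def)
  have "\<zeta> \<omega> = (\<Sum>p\<in>P. A p * (X0 \<omega> + (\<Sum>e\<in>F. path_coef t (u p) e * W e \<omega>)))" for \<omega>
    unfolding \<zeta>_def using X_expansion[OF rank F(1) edges] by simp
  then have \<zeta>_eq: "\<zeta> = (\<lambda>\<omega>. (\<Sum>p\<in>P. A p) * X0 \<omega> + (\<Sum>e\<in>F. b e * W e \<omega>))"
    by (intro ext) (simp add: b_def distrib_left sum.distrib sum_distrib_left sum_distrib_right
        sum.swap[of _ F P] mult.assoc)
  have inner: "(\<Sum>e\<in>F. path_coef t (u p) e * path_coef t (u p') e) = green t (proj (u p) - proj (u p')) / 3"
    if "p \<in> P" "p' \<in> P" for p p'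
  proof -
    have "(\<Sum>e\<in>F. path_coef t (u p) e * path_coef t (u p') e)
        = Sum_any (\<lambda>e. path_coef t (u p) e * path_coef t (u p') e)"
      using edges[OF that(1)] F(1) by (intro Sum_any.expand_superset[symmetric]) (auto dest: path_coef_eq_0)
    then show ?thesis using path_coef_inner[OF rank rank] that by simp
  qed
  have "(\<Sum>e\<in>F. (b e)\<^sup>2)
      = (\<Sum>p\<in>P. \<Sum>p'\<in>P. A p * A p' * (\<Sum>e\<in>F. path_coef t (u p) e * path_coef t (u p') e))"
    by (simp add: b_def power2_eq_square sum_product sum_distrib_left sum.swap[of _ F] mult_ac)
  also have "\<dots> = (\<Sum>p\<in>P. \<Sum>p'\<in>P. A p * A p' * green t (proj (u p) - proj (u p'))) / 3"
    by (simp add: inner sum_divide_distrib)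
  finally show "cov M \<zeta> X0 = (\<Sum>p\<in>P. A p)"
    and "variance \<zeta> = (\<Sum>p\<in>P. A p)\<^sup>2
      + (\<Sum>p\<in>P. \<Sum>p'\<in>P. A p * A p' * green t (proj (u p) - proj (u p'))) / 3"
    using noise_comb_moments[OF F, of "\<Sum>p\<in>P. A p" b] unfolding \<zeta>_eq by simp_all
qed

end

lemma divide_sqrt_add_le:
  fixes S Q L C :: real
  assumes "0 < L" "0 < C" "S\<^sup>2 * L \<le> C\<^sup>2 * Q"
  shows "S / sqrt (S\<^sup>2 + Q) \<le> C / sqrt L"
proof -
  have "0 \<le> C\<^sup>2 * Q" using assms(1) order_trans[OF _ assms(3)] by simp
  then have "0 \<le> Q" using assms(2) by (simp add: zero_le_mult_iff)
  show ?thesis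
  proof (cases "S \<le> 0")
    case True
    then show ?thesis using assms(1,2) \<open>0 \<le> Q\<close> by (simp add: divide_nonpos_nonneg order_trans[of _ 0])
  next
    case False
    have "S * sqrt L = sqrt (S\<^sup>2 * L)" using False assms(1) by (simp add: real_sqrt_mult)
    also have "\<dots> \<le> sqrt (C\<^sup>2 * (S\<^sup>2 + Q))"
    proof (rule real_sqrt_le_mono)
      have "0 \<le> C\<^sup>2 * S\<^sup>2" by simp
      then show "S\<^sup>2 * L \<le> C\<^sup>2 * (S\<^sup>2 + Q)" unfolding distrib_left using assms(3) by linarith
    qed
    also have "\<dots> = C * sqrt (S\<^sup>2 + Q)" using assms(2) by (simp add: real_sqrt_mult)
    finally have "S * sqrt L \<le> C * sqrt (S\<^sup>2 + Q)" .
    moreover have "0 < sqrt (S\<^sup>2 + Q)" "0 < sqrt L"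
      using False \<open>0 \<le> Q\<close> assms(1) by (simp_all add: add_pos_nonneg)
    ultimately show ?thesis by (simp add: divide_le_eq field_simps)
  qed
qed

lemma grid_green_form_bound:
  fixes A :: "nat \<times> nat \<Rightarrow> real"
  assumes "1 \<le> t" "1 \<le> N"
  defines "P \<equiv> {1..N} \<times> {1..N}" and "v \<equiv> \<lambda>p. (int (fst p), int (snd p))"
  shows "(\<Sum>p\<in>P. A p)\<^sup>2 * ln (real t)
    \<le> (2 ^ 24 * real N ^ 2)\<^sup>2 * ((\<Sum>p\<in>P. \<Sum>p'\<in>P. A p * A p' * green t (v p - v p')) / 3)"
proof -
  define Q where "Q = (\<Sum>p\<in>P. \<Sum>p'\<in>P. A p * A p' * green t (v p - v p'))"
  have P: "finite P" "card P = N\<^sup>2" "inj_on v P"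
    by (simp_all add: P_def v_def inj_on_def power2_eq_square)
  have dist: "\<bar>fst (v p - v p')\<bar> + \<bar>snd (v p - v p')\<bar> \<le> 2 * real N" if "p \<in> P" "p' \<in> P" for p p'
    using that by (auto simp: P_def v_def)
  have "0 \<le> (\<Sum>p\<in>P. (A p)\<^sup>2)" by (simp add: sum_nonneg)
  also have "\<dots> \<le> Q"
    unfolding Q_def using green_form_ge_diag[OF P(1,3) assms(1)] .
  finally have "0 \<le> Q" .
  have "1 \<le> real N ^ 4" using assms(2) by simp
  then have "30 * (1 + 9 / 2 * (2 * real N)\<^sup>2 * card P) \<le> (2 ^ 24 * real N ^ 2)\<^sup>2 / 3"
    using P(2) by (simp add: power_mult_distrib flip: power_mult)
  then have "30 * (1 + 9 / 2 * (2 * real N)\<^sup>2 * card P) * Q \<le> (2 ^ 24 * real N ^ 2)\<^sup>2 / 3 * Q"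
    using \<open>0 \<le> Q\<close> by (rule mult_right_mono)
  then show ?thesis
    using green_form_lower_bound[OF P(1,3) assms(1) dist, of A] unfolding Q_def by simp
qed

theorem mainTheorem16:
  fixes M :: "'a measure"
    and X0 :: "'a \<Rightarrow> real"
    and W :: "pt \<times> pt \<Rightarrow> 'a \<Rightarrow> real"
    and X :: "pt \<Rightarrow> 'a \<Rightarrow> real"
    and t N :: nat
    and a :: "nat \<Rightarrow> nat \<Rightarrow> real"
  assumes "prob_space M"
    and "distributed M lborel X0 std_normal_density"
    and "\<forall>e\<in>covers. distributed M lborel (W e) std_normal_density"
    and "prob_space.indep_vars M (\<lambda>_. borel)
           (\<lambda>k. case k of None \<Rightarrow> X0 | Some e \<Rightarrow> W e) (insert None (Some ` covers))"
    and "\<forall>v. rank v = 0 \<longrightarrow> X v = X0"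
    and "\<forall>v. rank v \<ge> 1 \<longrightarrow>
           X v = (\<lambda>\<omega>. (1/3) * (\<Sum>i\<in>{0,1,2::nat}. X (pred_pt v i) \<omega> + W (pred_pt v i, v) \<omega>))"
    and "t \<ge> 2" and "N \<ge> 1"
    and "\<exists>i\<in>{1..N}. \<exists>j\<in>{1..N}. a i j \<noteq> 0"
  shows "(let \<zeta> = (\<lambda>\<omega>. \<Sum>i\<in>{1..N}. \<Sum>j\<in>{1..N}.
                     a i j * X (int i, int j, int t - int i - int j) \<omega>)
          in cov M \<zeta> X0 / sqrt (prob_space.variance M \<zeta>))
         \<le> 2 ^ 24 * real N ^ 2 / sqrt (ln (real t))"
proof -
  interpret gaussian_broadcast M X0 W X
    using assms(1-6) by (simp add: gaussian_broadcast_def gaussian_broadcast_axioms_def)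
  define P where "P = {1..N} \<times> {1..N}"
  define A where "A p = a (fst p) (snd p)" for p
  define u where "u p = (int (fst p), int (snd p), int t - int (fst p) - int (snd p))" for p
  have P: "finite P" by (simp add: P_def)
  have rank: "rank (u p) = int t" for p by (simp add: u_def rank_def)
  have \<zeta>: "(\<lambda>\<omega>. \<Sum>i\<in>{1..N}. \<Sum>j\<in>{1..N}. a i j * X (int i, int j, int t - int i - int j) \<omega>)
      = (\<lambda>\<omega>. \<Sum>p\<in>P. A p * X (u p) \<omega>)"
    by (simp add: P_def A_def u_def sum.cartesian_product case_prod_beta)
  have "proj (u p) = (int (fst p), int (snd p))" for p by (simp add: u_def proj_def)
  then have "(\<Sum>p\<in>P. A p)\<^sup>2 * ln (real t)
      \<le> (2 ^ 24 * real N ^ 2)\<^sup>2 * ((\<Sum>p\<in>P. \<Sum>p'\<in>P. A p * A p' * green t (proj (u p) - proj (u p'))) / 3)"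
    using grid_green_form_bound[of t N A] assms(7,8) unfolding P_def by simp
  then show ?thesis
    unfolding Let_def \<zeta> lin_comb_moments[OF P rank]
    using assms(7,8) by (intro divide_sqrt_add_le) auto
qed

end
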